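(* Let $\epsilon>0$, let $\mathbf{w}\in\mathbb{R}^d$ be non-increasing, and let $1\le k\le d-1$ with $\mathbf{w}^k_{max}>\mathbf{w}^k_{min}$. For every scored vote $v\in\mathbb{D}_v$, the private view $\tilde v$ output by the additive mechanism satisfies $\mathbb{E}[\tilde v]=v$.
   Context: Candidates are $C_1,\dots,C_d$; a vote is a linear ordering; the scored vote $v$ assigns score $w_j$ to the candidate at rank $j$; $\mathbb{D}_v$ is the set of permutations of $\mathbf{w}$. Let $\mathcal{C}^k$ be the set of $k$-element subsets of candidates, $\mathbf{w}^k_{max}=\sum_{j=1}^kw_j$, $\mathbf{w}^k_{min}=\sum_{j=d-k+1}^dw_j$, $W=\sum_{j=1}^dw_j$. The additive mechanism on input $v$ outputs $S\in\mathcal{C}^k$ with probability $$\Pr[S\mid v]=\frac{\sum_{C_{j'}\in S}v_{j'}-\mathbf{w}^k_{min}}{\mathbf{w}^k_{max}-\mathbf{w}^k_{min}}\cdot\frac{e^\epsilon-1}{\Phi}+\frac1\Phi,\qquad \Phi=\binom dk\frac{\frac kd(e^\epsilon-1)W-e^\epsilon\mathbf{w}^k_{min}+\mathbf{w}^k_{max}}{\mathbf{w}^k_{max}-\mathbf{w}^k_{min}},$$ and the private view $\tilde v_j=a_k[C_j\in S]-b_k$, where $a_k=\big[W(e^\epsilon-1)-\tfrac dke^\epsilon\mathbf{w}^k_{min}+\tfrac dk\mathbf{w}^k_{max}\big]\frac{d-1}{(d-k)(e^\epsilon-1)}$ and $b_k=\big[\tfrac{(k-1)(e^\epsilon-1)}{d-1}W-e^\epsilon\mathbf{w}^k_{min}+\mathbf{w}^k_{max}\big]\frac{d-1}{(d-k)(e^\epsilon-1)}$.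 *)

theory Defs
  imports Complex_Main "HOL-Combinatorics.Permutations"
begin

text \<open>Candidates are indexed by 1..d; a weight vector is w :: nat => real,
  with w j the score of rank j.\<close>

definition wmax :: "(nat \<Rightarrow> real) \<Rightarrow> nat \<Rightarrow> real" where
  "wmax w k = (\<Sum>j=1..k. w j)"

definition wmin :: "(nat \<Rightarrow> real) \<Rightarrow> nat \<Rightarrow> nat \<Rightarrow> real" where
  "wmin w d k = (\<Sum>j=d-k+1..d. w j)"

definition Wtot :: "(nat \<Rightarrow> real) \<Rightarrow> nat \<Rightarrow> real" where
  "Wtot w d = (\<Sum>j=1..d. w j)"

definition scored_votes :: "(nat \<Rightarrow> real) \<Rightarrow> nat \<Rightarrow> (nat \<Rightarrow> real) set" where
  "scored_votes w d = {v. \<exists>\<sigma>. \<sigma> permutes {1..d} \<and> (\<forall>j\<in>{1..d}. v j = w (\<sigma> j))}"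

definition ksubsets :: "nat \<Rightarrow> nat \<Rightarrow> nat set set" where
  "ksubsets d k = {S. S \<subseteq> {1..d} \<and> card S = k}"

definition Phi :: "real \<Rightarrow> (nat \<Rightarrow> real) \<Rightarrow> nat \<Rightarrow> nat \<Rightarrow> real" where
  "Phi \<epsilon> w d k = real (d choose k) *
     ((real k / real d) * (exp \<epsilon> - 1) * Wtot w d - exp \<epsilon> * wmin w d k + wmax w k)
     / (wmax w k - wmin w d k)"

definition add_prob :: "real \<Rightarrow> (nat \<Rightarrow> real) \<Rightarrow> nat \<Rightarrow> nat \<Rightarrow> (nat \<Rightarrow> real) \<Rightarrow> nat set \<Rightarrow> real" where
  "add_prob \<epsilon> w d k v S =
     ((\<Sum>j\<in>S. v j) - wmin w d k) / (wmax w k - wmin w d k) * ((exp \<epsilon> - 1) / Phi \<epsilon> w d k)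
     + 1 / Phi \<epsilon> w d k"

definition a_coef :: "real \<Rightarrow> (nat \<Rightarrow> real) \<Rightarrow> nat \<Rightarrow> nat \<Rightarrow> real" where
  "a_coef \<epsilon> w d k =
     (Wtot w d * (exp \<epsilon> - 1) - (real d / real k) * exp \<epsilon> * wmin w d k
       + (real d / real k) * wmax w k)
     * (real d - 1) / ((real d - real k) * (exp \<epsilon> - 1))"

definition b_coef :: "real \<Rightarrow> (nat \<Rightarrow> real) \<Rightarrow> nat \<Rightarrow> nat \<Rightarrow> real" where
  "b_coef \<epsilon> w d k =
     ((real k - 1) * (exp \<epsilon> - 1) / (real d - 1) * Wtot w d - exp \<epsilon> * wmin w d k + wmax w k)
     * (real d - 1) / ((real d - real k) * (exp \<epsilon> - 1))"

definition private_view :: "real \<Rightarrow> (nat \<Rightarrow> real) \<Rightarrow> nat \<Rightarrow> nat \<Rightarrow> nat set \<Rightarrow> nat \<Rightarrow> real" where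
  "private_view \<epsilon> w d k S j = a_coef \<epsilon> w d k * (if j \<in> S then 1 else 0) - b_coef \<epsilon> w d k"

end

theory Submission
  imports Defs
begin

text \<open>
  The probability of a k-subset S is an affine function of its score \<open>\<Sum>j\<in>S. v j\<close>.
  Each candidate lies in a fraction k/d of all k-subsets, and among the subsets containing C_j
  every other candidate appears with frequency (k-1)/(d-1). Hence the probabilities sum to 1
  (\<Phi> is exactly the normaliser) and the marginal probability that C_j is selected is an
  affine function of v_j; a_k and b_k are the coefficients that invert this map. Monotonicity
  of w only serves to show \<Phi> \<noteq> 0: the lowest k weights average at most W/d.
\<close>

lemma subsets_containing_eq_image_insert:
  assumes "finite A" "i \<in> A"
  shows "{S. S \<subseteq> A \<and> card S = Suc m \<and> i \<in> S} = insert i ` {T. T \<subseteq> A - {i} \<and> card T = m}"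
proof (intro equalityI subsetI)
  fix S assume S: "S \<in> {S. S \<subseteq> A \<and> card S = Suc m \<and> i \<in> S}"
  then have "S = insert i (S - {i})" "card (S - {i}) = m"
    using card.infinite by fastforce+
  with S show "S \<in> insert i ` {T. T \<subseteq> A - {i} \<and> card T = m}" by blast
next
  fix S assume "S \<in> insert i ` {T. T \<subseteq> A - {i} \<and> card T = m}"
  then obtain T where "T \<subseteq> A - {i}" "card T = m" "S = insert i T" by blast
  moreover have "finite T" "i \<notin> T" using \<open>T \<subseteq> A - {i}\<close> assms(1) finite_subset by blast+
  ultimately show "S \<in> {S. S \<subseteq> A \<and> card S = Suc m \<and> i \<in> S}" using assms(2) by auto
qed

lemma card_subsets_containing:
  assumes "finite A" "i \<in> A"
  shows "real (card {S. S \<subseteq> A \<and> card S = m \<and> i \<in> S}) = real m / real (card A) * real (card A choose m)"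
proof (cases m)
  case 0
  have empty: "{S. S \<subseteq> A \<and> card S = 0 \<and> i \<in> S} = {}"
    using assms(1) by (auto simp: card_eq_0_iff dest: rev_finite_subset)
  show ?thesis by (simp only: 0 empty) simp
next
  case (Suc m')
  have "inj_on (insert i) {T. T \<subseteq> A - {i} \<and> card T = m'}"
    by (rule inj_onI) (metis Diff_insert_absorb subset_Diff_insert mem_Collect_eq)
  then have "card {S. S \<subseteq> A \<and> card S = m \<and> i \<in> S} = card (A - {i}) choose m'"
    using subsets_containing_eq_image_insert[OF assms] n_subsets[of "A - {i}"] assms(1)
    by (simp add: Suc card_image)
  moreover have "m * (card A choose m) = card A * ((card A - 1) choose m')"
    using times_binomial_minus1_eq[of m "card A"] Suc by simp
  then have "real m * real (card A choose m) = real (card A) * real ((card A - 1) choose m')"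
    by (simp flip: of_nat_mult)
  moreover have "real (card A) \<noteq> 0" using assms card_gt_0_iff by fastforce
  ultimately show ?thesis using assms by (simp add: field_simps)
qed

lemma sum_subsets_sum:
  assumes "finite A"
  shows "(\<Sum>S\<in>{S. S \<subseteq> A \<and> card S = m}. \<Sum>i\<in>S. f i)
       = real m / real (card A) * real (card A choose m) * (\<Sum>i\<in>A. f i :: real)"
proof -
  let ?K = "{S. S \<subseteq> A \<and> card S = m}"
  have "finite ?K" using assms by simp
  have "(\<Sum>S\<in>?K. \<Sum>i\<in>S. f i) = (\<Sum>S\<in>?K. \<Sum>i\<in>A. if i \<in> S then f i else 0)"
    by (rule sum.cong[OF refl]) (simp add: sum.If_cases assms Int_absorb1 Int_absorb2)
  also have "\<dots> = (\<Sum>i\<in>A. f i * real (card {S. S \<subseteq> A \<and> card S = m \<and> i \<in> S}))"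
    using \<open>finite ?K\<close> by (subst sum.swap) (auto simp: sum.If_cases Int_def conj_ac intro!: sum.cong)
  also have "\<dots> = (\<Sum>i\<in>A. f i * (real m / real (card A) * real (card A choose m)))"
    using card_subsets_containing[OF assms] by (intro sum.cong) auto
  finally show ?thesis by (metis mult.commute sum_distrib_right)
qed

lemma sum_subsets_containing_sum:
  assumes "finite A" "j \<in> A"
  shows "(\<Sum>S\<in>{S. S \<subseteq> A \<and> card S = m \<and> j \<in> S}. \<Sum>i\<in>S. f i)
       = real m / real (card A) * real (card A choose m)
         * (f j + (real m - 1) / (real (card A) - 1) * ((\<Sum>i\<in>A. f i) - f j))"
proof (cases m)
  case 0
  have empty: "{S. S \<subseteq> A \<and> card S = 0 \<and> j \<in> S} = {}"
    using assms(1) by (auto simp: card_eq_0_iff dest: rev_finite_subset)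
  show ?thesis by (simp only: 0 empty) simp
next
  case (Suc m')
  let ?T = "{T. T \<subseteq> A - {j} \<and> card T = m'}"
  have inj: "inj_on (insert j) ?T"
    by (rule inj_onI) (metis Diff_insert_absorb subset_Diff_insert mem_Collect_eq)
  have card_T: "real (card ?T) = real m / real (card A) * real (card A choose m)"
    using card_subsets_containing[OF assms, of m] subsets_containing_eq_image_insert[OF assms]
    by (simp add: Suc card_image[OF inj])
  have "(\<Sum>S\<in>{S. S \<subseteq> A \<and> card S = m \<and> j \<in> S}. \<Sum>i\<in>S. f i) = (\<Sum>T\<in>?T. \<Sum>i\<in>insert j T. f i)"
    by (simp add: Suc subsets_containing_eq_image_insert[OF assms] sum.reindex[OF inj])
  also have "\<dots> = (\<Sum>T\<in>?T. f j + (\<Sum>i\<in>T. f i))"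
  proof (rule sum.cong[OF refl])
    fix T assume "T \<in> ?T"
    then have "finite T" "j \<notin> T"
      using rev_finite_subset[OF finite_Diff[OF assms(1)]] by blast+
    then show "(\<Sum>i\<in>insert j T. f i) = f j + (\<Sum>i\<in>T. f i)" by simp
  qed
  also have "\<dots> = real (card ?T) * f j + real m' / real (card (A - {j})) * real (card ?T) * (\<Sum>i\<in>A - {j}. f i)"
    using sum_subsets_sum[where A="A - {j}" and m=m' and f=f] assms(1) n_subsets[of "A - {j}" m']
    by (simp add: sum.distrib)
  also have "\<dots> = real (card ?T) * (f j + (real m - 1) / (real (card A) - 1) * ((\<Sum>i\<in>A. f i) - f j))"
  proof -
    have "card A \<ge> 1" using assms by (auto simp: Suc_le_eq card_gt_0_iff)
    then have "real (card (A - {j})) = real (card A) - 1" using assms by (simp add: of_nat_diff)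
    then show ?thesis using assms by (simp add: Suc sum_diff1 algebra_simps)
  qed
  finally show ?thesis by (simp only: card_T)
qed

lemma d_times_wmin_le_k_times_Wtot:
  assumes antimono: "\<forall>i j. 1 \<le> i \<and> i \<le> j \<and> j \<le> d \<longrightarrow> w j \<le> w i"
    and "k \<le> d"
  shows "real d * wmin w d k \<le> real k * Wtot w d"
proof (cases "k = d")
  case True
  then show ?thesis by (simp add: wmin_def Wtot_def)
next
  case False
  define m where "m = d - k"
  have "m \<ge> 1" and d: "d = m + k" using False assms(2) by (auto simp: m_def)
  have wmin: "wmin w d k = (\<Sum>j=m+1..d. w j)"
    unfolding wmin_def m_def using assms(2) by (simp add: Suc_diff_le)
  have Wtot: "Wtot w d = (\<Sum>j=1..m. w j) + wmin w d k"
    unfolding Wtot_def wmin using sum.ub_add_nat[of 1 m w k] d by simp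
  have bottom: "wmin w d k \<le> real k * w m"
    unfolding wmin using sum_bounded_above[of "{m+1..d}" w "w m"] antimono \<open>m \<ge> 1\<close> d
    by simp
  have top: "real m * w m \<le> (\<Sum>j=1..m. w j)"
    using sum_bounded_below[of "{1..m}" "w m" w] antimono \<open>m \<ge> 1\<close> d by simp
  have "real d * wmin w d k = real k * wmin w d k + real m * wmin w d k"
    using d by (simp add: algebra_simps)
  also have "\<dots> \<le> real k * wmin w d k + real k * (real m * w m)"
    using mult_left_mono[OF bottom, of "real m"] by (simp add: algebra_simps)
  also have "\<dots> \<le> real k * Wtot w d"
    using mult_left_mono[OF top, of "real k"] by (simp add: Wtot algebra_simps)
  finally show ?thesis .
qed

text \<open>The numerator of \<Phi>: \<open>Phi \<epsilon> w d k = (d choose k) * add_norm \<epsilon> w d k / (wmax w k - wmin w d k)\<close>.\<close>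

definition add_norm :: "real \<Rightarrow> (nat \<Rightarrow> real) \<Rightarrow> nat \<Rightarrow> nat \<Rightarrow> real" where
  "add_norm \<epsilon> w d k = real k / real d * (exp \<epsilon> - 1) * Wtot w d - exp \<epsilon> * wmin w d k + wmax w k"

lemma add_norm_eq:
  "add_norm \<epsilon> w d k
     = (wmax w k - wmin w d k) + (exp \<epsilon> - 1) * (real k / real d * Wtot w d - wmin w d k)"
  by (simp add: add_norm_def algebra_simps)

lemma add_norm_pos:
  assumes "\<epsilon> \<ge> 0"
    and "\<forall>i j. 1 \<le> i \<and> i \<le> j \<and> j \<le> d \<longrightarrow> w j \<le> w i"
    and "k \<le> d" and "wmax w k > wmin w d k"
  shows "add_norm \<epsilon> w d k > 0"
proof -
  have "d > 0"
    using assms(3,4) by (cases "d = 0") (auto simp: wmax_def wmin_def)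
  then have "wmin w d k \<le> real k / real d * Wtot w d"
    using d_times_wmin_le_k_times_Wtot[OF assms(2,3)] by (simp add: field_simps)
  moreover have "exp \<epsilon> - 1 \<ge> 0" using assms(1) by simp
  ultimately have "(exp \<epsilon> - 1) * (real k / real d * Wtot w d - wmin w d k) \<ge> 0" by simp
  then show ?thesis unfolding add_norm_eq using assms(4) by linarith
qed

lemma add_prob_eq:
  assumes "wmax w k \<noteq> wmin w d k"
  shows "add_prob \<epsilon> w d k v S
    = ((exp \<epsilon> - 1) * ((\<Sum>j\<in>S. v j) - wmin w d k) + (wmax w k - wmin w d k))
      / (real (d choose k) * add_norm \<epsilon> w d k)"
proof -
  have Phi: "real (d choose k) * add_norm \<epsilon> w d k = (wmax w k - wmin w d k) * Phi \<epsilon> w d k"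
    using assms by (simp add: Phi_def add_norm_def)
  show ?thesis
    using assms unfolding Phi by (cases "Phi \<epsilon> w d k = 0") (simp_all add: add_prob_def field_simps)
qed

lemma sum_add_prob:
  assumes "wmax w k \<noteq> wmin w d k" and "add_norm \<epsilon> w d k \<noteq> 0" and "k \<le> d"
    and "(\<Sum>j=1..d. v j) = Wtot w d"
  shows "(\<Sum>S\<in>ksubsets d k. add_prob \<epsilon> w d k v S) = 1"
proof -
  let ?N = "real (d choose k)"
  have score_sum: "(\<Sum>S\<in>ksubsets d k. \<Sum>j\<in>S. v j) = real k / real d * ?N * Wtot w d"
    using sum_subsets_sum[where A="{1..d}" and m=k and f=v] assms(4) by (simp add: ksubsets_def)
  have card: "card (ksubsets d k) = d choose k"
    using n_subsets[of "{1..d}" k] by (simp add: ksubsets_def)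
  have "(\<Sum>S\<in>ksubsets d k. add_prob \<epsilon> w d k v S)
      = (\<Sum>S\<in>ksubsets d k. (exp \<epsilon> - 1) * ((\<Sum>j\<in>S. v j) - wmin w d k) + (wmax w k - wmin w d k))
        / (?N * add_norm \<epsilon> w d k)"
    by (simp add: add_prob_eq[OF assms(1)] sum_divide_distrib)
  also have "(\<Sum>S\<in>ksubsets d k. (exp \<epsilon> - 1) * ((\<Sum>j\<in>S. v j) - wmin w d k) + (wmax w k - wmin w d k))
      = ?N * add_norm \<epsilon> w d k"
    by (simp add: sum.distrib sum_subtractf card score_sum add_norm_eq flip: sum_distrib_left)
      (simp add: algebra_simps)
  finally show ?thesis using assms(2,3) by simp
qed

lemma sum_add_prob_containing:
  assumes "wmax w k \<noteq> wmin w d k" and "add_norm \<epsilon> w d k \<noteq> 0" and "k \<le> d"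
    and "(\<Sum>j=1..d. v j) = Wtot w d" and "j \<in> {1..d}"
  shows "(\<Sum>S\<in>{S\<in>ksubsets d k. j \<in> S}. add_prob \<epsilon> w d k v S)
    = real k / real d
      * ((exp \<epsilon> - 1) * (v j + (real k - 1) / (real d - 1) * (Wtot w d - v j) - wmin w d k)
         + (wmax w k - wmin w d k))
      / add_norm \<epsilon> w d k"
proof -
  let ?N = "real (d choose k)" and ?Kj = "{S\<in>ksubsets d k. j \<in> S}"
  have Kj: "?Kj = {S. S \<subseteq> {1..d} \<and> card S = k \<and> j \<in> S}"
    by (auto simp: ksubsets_def)
  have score_sum: "(\<Sum>S\<in>?Kj. \<Sum>i\<in>S. v i)
      = real k / real d * ?N * (v j + (real k - 1) / (real d - 1) * (Wtot w d - v j))"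
    using sum_subsets_containing_sum[where A="{1..d}" and m=k and f=v] assms(4,5) by (simp add: Kj)
  have card: "real (card ?Kj) = real k / real d * ?N"
    using card_subsets_containing[where A="{1..d}" and m=k] assms(5) by (simp add: Kj)
  have "(\<Sum>S\<in>?Kj. add_prob \<epsilon> w d k v S)
      = (\<Sum>S\<in>?Kj. (exp \<epsilon> - 1) * ((\<Sum>i\<in>S. v i) - wmin w d k) + (wmax w k - wmin w d k))
        / (?N * add_norm \<epsilon> w d k)"
    by (simp add: add_prob_eq[OF assms(1)] sum_divide_distrib)
  also have "(\<Sum>S\<in>?Kj. (exp \<epsilon> - 1) * ((\<Sum>i\<in>S. v i) - wmin w d k) + (wmax w k - wmin w d k))
      = ?N * (real k / real d
        * ((exp \<epsilon> - 1) * (v j + (real k - 1) / (real d - 1) * (Wtot w d - v j) - wmin w d k)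
           + (wmax w k - wmin w d k)))"
    by (simp add: sum.distrib sum_subtractf card score_sum flip: sum_distrib_left)
      (simp add: algebra_simps divide_inverse)
  finally show ?thesis using assms(3) by simp
qed

lemma a_coef_eq:
  assumes "k > 0" and "d > 0"
  shows "a_coef \<epsilon> w d k
    = real d / real k * add_norm \<epsilon> w d k * (real d - 1) / ((real d - real k) * (exp \<epsilon> - 1))"
proof -
  have "Wtot w d * (exp \<epsilon> - 1) - real d / real k * exp \<epsilon> * wmin w d k + real d / real k * wmax w k
      = real d / real k * add_norm \<epsilon> w d k"
    using assms by (simp add: add_norm_def field_simps)
  then show ?thesis by (simp only: a_coef_def)
qed

lemma b_coef_eq:
  "b_coef \<epsilon> w d k
    = ((exp \<epsilon> - 1) * ((real k - 1) / (real d - 1) * Wtot w d - wmin w d k) + (wmax w k - wmin w d k))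
      * (real d - 1) / ((real d - real k) * (exp \<epsilon> - 1))"
proof -
  have "(real k - 1) * (exp \<epsilon> - 1) / (real d - 1) * Wtot w d - exp \<epsilon> * wmin w d k + wmax w k
      = (exp \<epsilon> - 1) * ((real k - 1) / (real d - 1) * Wtot w d - wmin w d k) + (wmax w k - wmin w d k)"
    by (simp add: algebra_simps)
  then show ?thesis by (simp only: b_coef_def)
qed

lemma sum_add_prob_private_view:
  "(\<Sum>S\<in>ksubsets d k. add_prob \<epsilon> w d k v S * private_view \<epsilon> w d k S j)
    = a_coef \<epsilon> w d k * (\<Sum>S\<in>{S\<in>ksubsets d k. j \<in> S}. add_prob \<epsilon> w d k v S)
      - b_coef \<epsilon> w d k * (\<Sum>S\<in>ksubsets d k. add_prob \<epsilon> w d k v S)"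
proof -
  have "(\<Sum>S\<in>ksubsets d k. add_prob \<epsilon> w d k v S * private_view \<epsilon> w d k S j)
      = (\<Sum>S\<in>ksubsets d k. a_coef \<epsilon> w d k * (if j \<in> S then add_prob \<epsilon> w d k v S else 0)
          - b_coef \<epsilon> w d k * add_prob \<epsilon> w d k v S)"
    by (rule sum.cong) (auto simp: private_view_def algebra_simps)
  moreover have "finite (ksubsets d k)" by (simp add: ksubsets_def)
  ultimately show ?thesis
    by (simp add: sum_subtractf sum.inter_filter flip: sum_distrib_left)
qed

lemma sum_add_prob_private_view_eq:
  assumes "\<epsilon> \<noteq> 0" and "0 < k" and "k < d"
    and "wmax w k \<noteq> wmin w d k" and "add_norm \<epsilon> w d k \<noteq> 0"
    and "(\<Sum>j=1..d. v j) = Wtot w d" and "j \<in> {1..d}"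
  shows "(\<Sum>S\<in>ksubsets d k. add_prob \<epsilon> w d k v S * private_view \<epsilon> w d k S j) = v j"
proof -
  define c where "c = (real d - 1) / ((real d - real k) * (exp \<epsilon> - 1))"
  define X where "X = (exp \<epsilon> - 1) * (v j + (real k - 1) / (real d - 1) * (Wtot w d - v j) - wmin w d k)
    + (wmax w k - wmin w d k)"
  define Y where "Y = (exp \<epsilon> - 1) * ((real k - 1) / (real d - 1) * Wtot w d - wmin w d k)
    + (wmax w k - wmin w d k)"
  have nonzero: "real k \<noteq> 0" "real d \<noteq> 0" "real d - 1 \<noteq> 0" "real d - real k \<noteq> 0" "exp \<epsilon> - 1 \<noteq> 0"
    using assms(1-3) by auto
  have "(\<Sum>S\<in>ksubsets d k. add_prob \<epsilon> w d k v S * private_view \<epsilon> w d k S j)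
      = real d / real k * add_norm \<epsilon> w d k * c * (real k / real d * X / add_norm \<epsilon> w d k) - Y * c"
    using sum_add_prob[OF assms(4,5) _ assms(6)] sum_add_prob_containing[OF assms(4,5) _ assms(6,7)]
      assms(2,3)
    by (simp add: sum_add_prob_private_view a_coef_eq b_coef_eq c_def X_def Y_def)
  also have "\<dots> = (X - Y) * c"
    using nonzero assms(5) by (simp add: field_simps)
  also have "X - Y = (exp \<epsilon> - 1) * (1 - (real k - 1) / (real d - 1)) * v j"
    by (simp add: X_def Y_def algebra_simps divide_inverse)
  also have "1 - (real k - 1) / (real d - 1) = (real d - real k) / (real d - 1)"
    using nonzero by (simp add: field_simps)
  finally show ?thesis
    using nonzero by (simp add: c_def)
qed

lemma scored_votes_sum:
  assumes "v \<in> scored_votes w d"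
  shows "(\<Sum>j=1..d. v j) = Wtot w d"
proof -
  obtain \<sigma> where \<sigma>: "\<sigma> permutes {1..d}" "\<forall>j\<in>{1..d}. v j = w (\<sigma> j)"
    using assms by (auto simp: scored_votes_def)
  then have "(\<Sum>j=1..d. v j) = (\<Sum>j=1..d. w (\<sigma> j))" by simp
  also have "\<dots> = Wtot w d"
    using sum.permute[OF \<sigma>(1), of w] by (simp add: Wtot_def)
  finally show ?thesis .
qed

theorem lemma6p3:
  fixes \<epsilon> :: real and w v :: "nat \<Rightarrow> real" and d k :: nat
  assumes "\<epsilon> > 0"
    and "\<forall>i j. 1 \<le> i \<and> i \<le> j \<and> j \<le> d \<longrightarrow> w j \<le> w i"
    and "1 \<le> k" and "k \<le> d - 1"
    and "wmax w k > wmin w d k"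
    and "v \<in> scored_votes w d"
  shows "\<forall>j\<in>{1..d}.
           (\<Sum>S\<in>ksubsets d k. add_prob \<epsilon> w d k v S * private_view \<epsilon> w d k S j) = v j"
proof -
  have "k < d" using assms(3,4) by simp
  then have "add_norm \<epsilon> w d k > 0"
    using add_norm_pos[OF _ assms(2) _ assms(5)] assms(1) by simp
  then show ?thesis
    using sum_add_prob_private_view_eq[OF _ _ \<open>k < d\<close> _ _ scored_votes_sum[OF assms(6)]] assms(1,3,5)
    by simp
qed

end
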